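(* For any tight cut $\partial(X)$ of a connected bipartite cubic graph $H$, with $H_1:=H/\overline{X}\rightarrow\overline{x}$ and $H_2:=H/X\rightarrow x$, \[\rho(H)=\rho(H_1)-\rho_{H_1}(\overline{x})+\rho(H_2)-\rho_{H_2}(x)+\rho_{H_1}(\overline{x})\,\rho_{H_2}(x).\]
   Context: Graphs are loopless but may have parallel edges. A cut $C$ of a matching covered graph is tight if $|C\cap M|=1$ for every perfect matching $M$. $H/\overline{X}\rightarrow\overline{x}$ is $H$ with $\overline{X}=V(H)-X$ shrunk to a single vertex $\overline{x}$, and $H/X\rightarrow x$ is analogous. For a connected bipartite cubic graph $H[A,B]$, a pair $(a,b)$ with $a\in A$, $b\in B$ is $\lambda$-matchable if $H$ has a spanning subgraph in which $a,b$ have degree $3$ and every other vertex degree $1$; $\rho(H)$ is the number of such pairs, and for a vertex $u$, $\rho_H(u)$ is the number of vertices $w$ such that the pair formed by $u$ and $w$ is $\lambda$-matchable. *)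

theory Defs
  imports Main
begin

text \<open>A loopless multigraph is given by a vertex set V, an edge set E (edge identifiers,
so parallel edges are allowed) and an endpoint map ends, each edge having exactly two
distinct endpoints in V.\<close>

definition mgraph :: "'v set \<Rightarrow> 'e set \<Rightarrow> ('e \<Rightarrow> 'v set) \<Rightarrow> bool" where
  "mgraph V E ends \<longleftrightarrow> finite V \<and> finite E \<and>
     (\<forall>e\<in>E. ends e \<subseteq> V \<and> card (ends e) = 2)"

definition deg :: "'e set \<Rightarrow> ('e \<Rightarrow> 'v set) \<Rightarrow> 'v \<Rightarrow> nat" where
  "deg F ends v = card {e\<in>F. v \<in> ends e}"

definition cubic :: "'v set \<Rightarrow> 'e set \<Rightarrow> ('e \<Rightarrow> 'v set) \<Rightarrow> bool" where
  "cubic V E ends \<longleftrightarrow> (\<forall>v\<in>V. deg E ends v = 3)"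

definition adj :: "'e set \<Rightarrow> ('e \<Rightarrow> 'v set) \<Rightarrow> ('v \<times> 'v) set" where
  "adj E ends = {(u, w). \<exists>e\<in>E. ends e = {u, w}}"

definition connected_graph :: "'v set \<Rightarrow> 'e set \<Rightarrow> ('e \<Rightarrow> 'v set) \<Rightarrow> bool" where
  "connected_graph V E ends \<longleftrightarrow> V \<noteq> {} \<and> (\<forall>u\<in>V. \<forall>w\<in>V. (u, w) \<in> (adj E ends)\<^sup>*)"

definition bipartition :: "'v set \<Rightarrow> 'e set \<Rightarrow> ('e \<Rightarrow> 'v set) \<Rightarrow> 'v set \<Rightarrow> 'v set \<Rightarrow> bool" where
  "bipartition V E ends A B \<longleftrightarrow> A \<union> B = V \<and> A \<inter> B = {} \<and>
     (\<forall>e\<in>E. card (ends e \<inter> A) = 1 \<and> card (ends e \<inter> B) = 1)"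

definition bipartite :: "'v set \<Rightarrow> 'e set \<Rightarrow> ('e \<Rightarrow> 'v set) \<Rightarrow> bool" where
  "bipartite V E ends \<longleftrightarrow> (\<exists>A B. bipartition V E ends A B)"

definition perfect_matching :: "'v set \<Rightarrow> 'e set \<Rightarrow> ('e \<Rightarrow> 'v set) \<Rightarrow> 'e set \<Rightarrow> bool" where
  "perfect_matching V E ends M \<longleftrightarrow> M \<subseteq> E \<and> (\<forall>v\<in>V. deg M ends v = 1)"

definition cut :: "'e set \<Rightarrow> ('e \<Rightarrow> 'v set) \<Rightarrow> 'v set \<Rightarrow> 'e set" where
  "cut E ends X = {e\<in>E. card (ends e \<inter> X) = 1}"

definition tight_cut :: "'v set \<Rightarrow> 'e set \<Rightarrow> ('e \<Rightarrow> 'v set) \<Rightarrow> 'v set \<Rightarrow> bool" where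
  "tight_cut V E ends X \<longleftrightarrow>
     (\<forall>M. perfect_matching V E ends M \<longrightarrow> card (cut E ends X \<inter> M) = 1)"

text \<open>Shrinking a vertex set S to a single new vertex (None); other vertices v become Some v.
Edges with both ends in S (which would become loops) are deleted.\<close>
definition shrink_map :: "'v set \<Rightarrow> 'v \<Rightarrow> 'v option" where
  "shrink_map S v = (if v \<in> S then None else Some v)"

definition shrinkV :: "'v set \<Rightarrow> 'v set \<Rightarrow> 'v option set" where
  "shrinkV V S = Some ` (V - S) \<union> {None}"

definition shrinkE :: "'e set \<Rightarrow> ('e \<Rightarrow> 'v set) \<Rightarrow> 'v set \<Rightarrow> 'e set" where
  "shrinkE E ends S = {e\<in>E. ends e - S \<noteq> {}}"

definition shrink_ends :: "('e \<Rightarrow> 'v set) \<Rightarrow> 'v set \<Rightarrow> 'e \<Rightarrow> 'v option set" where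
  "shrink_ends ends S e = shrink_map S ` ends e"

definition lam_matchable :: "'v set \<Rightarrow> 'e set \<Rightarrow> ('e \<Rightarrow> 'v set) \<Rightarrow> 'v \<Rightarrow> 'v \<Rightarrow> bool" where
  "lam_matchable V E ends a b \<longleftrightarrow> a \<in> V \<and> b \<in> V \<and>
     (\<exists>F\<subseteq>E. deg F ends a = 3 \<and> deg F ends b = 3 \<and> (\<forall>v\<in>V - {a, b}. deg F ends v = 1))"

text \<open>The bipartition (A,B) of a connected bipartite graph is unique up to swapping the
sides; the counts below are invariant under the swap.\<close>
definition sides :: "'v set \<Rightarrow> 'e set \<Rightarrow> ('e \<Rightarrow> 'v set) \<Rightarrow> 'v set \<times> 'v set" where
  "sides V E ends = (SOME p. bipartition V E ends (fst p) (snd p))"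

definition rho :: "'v set \<Rightarrow> 'e set \<Rightarrow> ('e \<Rightarrow> 'v set) \<Rightarrow> nat" where
  "rho V E ends = (let (A, B) = sides V E ends in
     card {(a, b). a \<in> A \<and> b \<in> B \<and> lam_matchable V E ends a b})"

definition rho_v :: "'v set \<Rightarrow> 'e set \<Rightarrow> ('e \<Rightarrow> 'v set) \<Rightarrow> 'v \<Rightarrow> nat" where
  "rho_v V E ends u = (let (A, B) = sides V E ends in
     card {w. ((u \<in> A \<and> w \<in> B \<and> lam_matchable V E ends u w) \<or>
               (u \<in> B \<and> w \<in> A \<and> lam_matchable V E ends w u))})"

end

theory Submission
  imports Defs
begin

(* Let (A, B) be the bipartition of H and C the tight cut.  Summing the degrees of a spanning
   subgraph F over X \<inter> A and over X \<inter> B, the difference is a signed count of the edges of F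
   in C.  Every edge of a regular bipartite graph lies in a perfect matching (Hall's theorem), so
   applying this to perfect matchings shows that all edges of C have their end in X on the same
   side, say A, that card (X \<inter> A) = card (X \<inter> B) + 1 and that C has three edges.  Applied to
   a lambda-subgraph F it shows that F contains one edge of C when both special vertices lie in
   X, and all of C when they are separated by the cut.  Consequently the lambda-pairs of H inside
   X are those of H_1 avoiding the contracted vertex (restrict F to H_1, or complete a subgraph of
   H_1 by the outer part of a perfect matching through its cut edge), and a pair separated by
   the cut is lambda-matchable iff both its members are lambda-partners of the contracted vertex
   in H_1 resp. H_2 (restrict, or glue along C).  Counting ordered pairs gives the formula. *)

section \<open>Hall's marriage theorem\<close>

definition hall_condition :: "'a set \<Rightarrow> ('a \<Rightarrow> 'b set) \<Rightarrow> bool" where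
  "hall_condition S R \<longleftrightarrow> (\<forall>T\<subseteq>S. card T \<le> card (\<Union>(R ` T)))"

lemma hall_condition_subset: "hall_condition S R \<Longrightarrow> T \<subseteq> S \<Longrightarrow> hall_condition T R"
  unfolding hall_condition_def by blast

lemma hall_condition_remove_critical:
  assumes fin: "finite S" "\<And>s. s \<in> S \<Longrightarrow> finite (R s)" and hall: "hall_condition S R"
    and T: "T \<subseteq> S" "card (\<Union>(R ` T)) = card T"
  shows "hall_condition (S - T) (\<lambda>s. R s - \<Union>(R ` T))"
  unfolding hall_condition_def
proof (intro allI impI)
  fix U assume U: "U \<subseteq> S - T"
  have UT: "U \<union> T \<subseteq> S" "U \<inter> T = {}" using U T by auto
  have finUT: "finite (\<Union>(R ` (U \<union> T)))"
    using UT(1) fin by (meson finite_UN_I finite_subset subsetD)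
  have sub: "\<Union>(R ` T) \<subseteq> \<Union>(R ` (U \<union> T))" by auto
  have "card U + card T = card (U \<union> T)"
    using UT fin(1) by (metis card_Un_disjoint finite_Un finite_subset)
  also have "\<dots> \<le> card (\<Union>(R ` (U \<union> T)))"
    using hall UT(1) unfolding hall_condition_def by blast
  also have "\<dots> = card (\<Union>(R ` (U \<union> T)) - \<Union>(R ` T)) + card (\<Union>(R ` T))"
    using card_Diff_subset[OF finite_subset[OF sub finUT] sub] card_mono[OF finUT sub] by simp
  also have "\<Union>(R ` (U \<union> T)) - \<Union>(R ` T) = \<Union>((\<lambda>s. R s - \<Union>(R ` T)) ` U)" by auto
  finally show "card U \<le> card (\<Union>((\<lambda>s. R s - \<Union>(R ` T)) ` U))" using T(2) by simp
qed

lemma hall_condition_remove_point: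
  assumes hall: "hall_condition S R"
    and no_critical: "\<And>T. T \<subseteq> S \<Longrightarrow> T \<noteq> {} \<Longrightarrow> T \<noteq> S \<Longrightarrow> card (\<Union>(R ` T)) \<noteq> card T"
    and s: "s \<in> S"
  shows "hall_condition (S - {s}) (\<lambda>u. R u - {t})"
  unfolding hall_condition_def
proof (intro allI impI)
  fix U assume U: "U \<subseteq> S - {s}"
  show "card U \<le> card (\<Union>((\<lambda>u. R u - {t}) ` U))"
  proof (cases "U = {}")
    case False
    have "card U \<le> card (\<Union>(R ` U))" using hall U unfolding hall_condition_def by blast
    moreover have "card (\<Union>(R ` U)) \<noteq> card U" using no_critical[of U] U s False by blast
    ultimately have "card U < card (\<Union>(R ` U))" by linarith
    moreover have "\<Union>((\<lambda>u. R u - {t}) ` U) = \<Union>(R ` U) - {t}" by auto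
    ultimately show ?thesis by (auto simp: card_Diff_singleton_if)
  qed simp
qed

theorem marriage:
  assumes "finite S" and "\<And>s. s \<in> S \<Longrightarrow> finite (R s)" and "hall_condition S R"
  shows "\<exists>f. inj_on f S \<and> (\<forall>s\<in>S. f s \<in> R s)"
  using assms
proof (induction "card S" arbitrary: S R rule: less_induct)
  case less
  show ?case
  proof (cases "\<exists>T. T \<subseteq> S \<and> T \<noteq> {} \<and> T \<noteq> S \<and> card (\<Union>(R ` T)) = card T")
    case True
    then obtain T where T: "T \<subseteq> S" "T \<noteq> {}" "T \<noteq> S" "card (\<Union>(R ` T)) = card T" by blast
    define R' where "R' s = R s - \<Union>(R ` T)" for s
    have fin: "finite T" "finite (S - T)" using finite_subset[OF T(1) less.prems(1)] less.prems(1) by auto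
    have lt1: "card T < card S" using T(1,3) less.prems(1) by (simp add: psubset_card_mono psubset_eq)
    have lt2: "card (S - T) < card S"
      using card_Diff_subset[OF fin(1) T(1)] card_gt_0_iff[of T] T(2) fin(1) lt1 by linarith
    obtain f1 where f1: "inj_on f1 T" "\<forall>s\<in>T. f1 s \<in> R s"
      using less.hyps[of T R, OF lt1 fin(1)] less.prems(2) T(1) hall_condition_subset[OF less.prems(3) T(1)]
      by blast
    obtain f2 where f2: "inj_on f2 (S - T)" "\<forall>s\<in>S - T. f2 s \<in> R' s"
      using less.hyps[of "S - T" R', OF lt2 fin(2)] less.prems(2)
        hall_condition_remove_critical[OF less.prems T(1,4)]
      unfolding R'_def by blast
    have "f1 ` T \<inter> f2 ` (S - T) = {}" using f1(2) f2(2) by (auto simp: R'_def)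
    then have "inj_on (\<lambda>s. if s \<in> T then f1 s else f2 s) (T \<union> (S - T))"
      by (rule inj_on_disjoint_Un[OF f1(1) f2(1)])
    moreover have "T \<union> (S - T) = S" using T(1) by blast
    ultimately show ?thesis
      using f1(2) f2(2) by (intro exI[of _ "\<lambda>s. if s \<in> T then f1 s else f2 s"]) (auto simp: R'_def)
  next
    case no_critical: False
    show ?thesis
    proof (cases "S = {}")
      case False
      then obtain s where s: "s \<in> S" by blast
      have "card {s} \<le> card (R s)" using less.prems(3) s unfolding hall_condition_def by force
      then obtain t where t: "t \<in> R s" by fastforce
      have "card (\<Union>(R ` T)) \<noteq> card T" if "T \<subseteq> S" "T \<noteq> {}" "T \<noteq> S" for T
        using no_critical that by blast
      then have "hall_condition (S - {s}) (\<lambda>u. R u - {t})"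
        by (rule hall_condition_remove_point[OF less.prems(3) _ s])
      then obtain f where f: "inj_on f (S - {s})" "\<forall>u\<in>S - {s}. f u \<in> R u - {t}"
        using less.hyps[of "S - {s}" "\<lambda>u. R u - {t}"] card_Diff1_less[OF less.prems(1) s] less.prems(1,2)
        by (simp; blast)
      have "inj_on (f(s := t)) (insert s (S - {s}))" using f by (auto simp: inj_on_def)
      then show ?thesis using f(2) t s by (auto simp: insert_absorb)
    qed simp
  qed
qed

section \<open>Degrees, cuts and contraction in multigraphs\<close>

lemma deg_eq_sum_of_bool: "finite F \<Longrightarrow> deg F ends v = (\<Sum>e\<in>F. of_bool (v \<in> ends e))"
  by (simp add: deg_def Int_def)

lemma sum_deg_eq_sum_card_ends:
  assumes "finite F" and "finite W"
  shows "(\<Sum>v\<in>W. deg F ends v) = (\<Sum>e\<in>F. card (ends e \<inter> W))"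
proof -
  have "(\<Sum>v\<in>W. deg F ends v) = (\<Sum>v\<in>W. \<Sum>e\<in>F. of_bool (v \<in> ends e))"
    using assms(1) by (simp add: deg_eq_sum_of_bool)
  also have "\<dots> = (\<Sum>e\<in>F. \<Sum>v\<in>W. of_bool (v \<in> ends e))"
    by (rule sum.swap)
  also have "\<dots> = (\<Sum>e\<in>F. card (ends e \<inter> W))"
    using assms(2) by (simp add: Int_commute)
  finally show ?thesis .
qed

lemma mgraph_edgeE:
  assumes "mgraph V E ends" and "e \<in> E"
  obtains x y where "ends e = {x, y}" and "x \<noteq> y" and "x \<in> V" and "y \<in> V"
  using assms unfolding mgraph_def by (metis card_2_iff insert_subset)

lemma cut_iff:
  assumes "mgraph V E ends" and "e \<in> E"
  shows "e \<in> cut E ends X \<longleftrightarrow> ends e \<inter> X \<noteq> {} \<and> ends e - X \<noteq> {}"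
proof -
  obtain x y where "ends e = {x, y}" "x \<noteq> y" using mgraph_edgeE[OF assms] by metis
  then show ?thesis
    using assms(2) by (cases "x \<in> X"; cases "y \<in> X") (auto simp: cut_def Int_insert_left)
qed

lemma cut_Diff:
  assumes "mgraph V E ends" and "X \<subseteq> V"
  shows "cut E ends (V - X) = cut E ends X"
proof -
  have "ends e \<subseteq> V" if "e \<in> E" for e using assms(1) that by (simp add: mgraph_def)
  then show ?thesis
    using cut_iff[OF assms(1)] by (auto simp: cut_def[of E ends] intro!: set_eqI) blast+
qed

lemma cut_subset_shrinkE:
  assumes "mgraph V E ends"
  shows "cut E ends X \<subseteq> shrinkE E ends X"
proof
  fix e assume e: "e \<in> cut E ends X"
  have eE: "e \<in> E" using e by (simp add: cut_def)
  show "e \<in> shrinkE E ends X" using cut_iff[OF assms eE] e eE by (simp add: shrinkE_def)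
qed

lemma tight_cut_matching_edge:
  assumes "tight_cut V E ends X" and "perfect_matching V E ends M" and "c \<in> M" and "c \<in> cut E ends X"
  shows "M \<inter> cut E ends X = {c}"
proof -
  have "card (cut E ends X \<inter> M) = 1" using assms(1,2) by (simp add: tight_cut_def)
  then obtain c' where "cut E ends X \<inter> M = {c'}" by (rule card_1_singletonE)
  then show ?thesis using assms(3,4) by (metis Int_commute IntI singletonD)
qed

lemma deg_Un_cut:
  assumes "mgraph V E ends" and "F2 \<subseteq> shrinkE E ends X" and "F2 \<inter> cut E ends X \<subseteq> F1"
    and "v \<in> X"
  shows "deg (F1 \<union> F2) ends v = deg F1 ends v"
proof -
  have "e \<in> F1" if "e \<in> F2" "v \<in> ends e" for e
    using that assms cut_iff[OF assms(1), of e X] by (auto simp: shrinkE_def)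
  then have "{e \<in> F1 \<union> F2. v \<in> ends e} = {e \<in> F1. v \<in> ends e}" by blast
  then show ?thesis by (simp add: deg_def)
qed

lemma deg_shrink_ends_Some: "v \<notin> S \<Longrightarrow> deg F (shrink_ends ends S) (Some v) = deg F ends v"
  unfolding deg_def shrink_ends_def shrink_map_def
  by (rule arg_cong[where f = card]) (auto simp: image_iff split: if_splits)

lemma deg_shrink_ends_None: "deg F (shrink_ends ends S) None = card {e \<in> F. ends e \<inter> S \<noteq> {}}"
  unfolding deg_def shrink_ends_def shrink_map_def
  by (rule arg_cong[where f = card]) (auto simp: image_iff split: if_splits)

lemma deg_Int_shrinkE: "v \<notin> S \<Longrightarrow> F \<subseteq> E \<Longrightarrow> deg (F \<inter> shrinkE E ends S) ends v = deg F ends v"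
  unfolding deg_def shrinkE_def by (rule arg_cong[where f = card]) auto

section \<open>Lambda-subgraphs\<close>

definition lam_subgraph :: "'v set \<Rightarrow> 'e set \<Rightarrow> ('e \<Rightarrow> 'v set) \<Rightarrow> 'v \<Rightarrow> 'v \<Rightarrow> 'e set \<Rightarrow> bool" where
  "lam_subgraph V E ends a b F \<longleftrightarrow> F \<subseteq> E \<and> a \<in> V \<and> b \<in> V \<and>
     deg F ends a = 3 \<and> deg F ends b = 3 \<and> (\<forall>v\<in>V - {a, b}. deg F ends v = 1)"

definition lam_pairs :: "'v set \<Rightarrow> 'e set \<Rightarrow> ('e \<Rightarrow> 'v set) \<Rightarrow> ('v \<times> 'v) set" where
  "lam_pairs V E ends = {(a, b). lam_matchable V E ends a b}"

definition lam_partners :: "'v set \<Rightarrow> 'e set \<Rightarrow> ('e \<Rightarrow> 'v set) \<Rightarrow> 'v \<Rightarrow> 'v set" where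
  "lam_partners V E ends u = {w. lam_matchable V E ends u w}"

lemma lam_matchable_iff: "lam_matchable V E ends a b \<longleftrightarrow> (\<exists>F. lam_subgraph V E ends a b F)"
  unfolding lam_matchable_def lam_subgraph_def by blast

lemma lam_subgraph_sym: "lam_subgraph V E ends a b F \<longleftrightarrow> lam_subgraph V E ends b a F"
  unfolding lam_subgraph_def by (auto simp: insert_commute)

lemma lam_matchable_sym: "lam_matchable V E ends a b \<longleftrightarrow> lam_matchable V E ends b a"
  unfolding lam_matchable_iff using lam_subgraph_sym by metis

lemma lam_pairs_subset: "lam_pairs V E ends \<subseteq> V \<times> V"
  by (auto simp: lam_pairs_def lam_matchable_def)

lemma lam_partners_subset: "lam_partners V E ends u \<subseteq> V"
  by (auto simp: lam_partners_def lam_matchable_def)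

lemma sym_lam_pairs: "sym (lam_pairs V E ends)"
  unfolding sym_def lam_pairs_def using lam_matchable_sym[of V E ends] by blast

lemma card_sym_split:
  assumes "finite L" and "L \<subseteq> V \<times> V" and "sym L"
  shows "card L = card (L \<inter> X \<times> X) + card (L \<inter> (V - X) \<times> (V - X)) + 2 * card (L \<inter> X \<times> (V - X))"
proof -
  let ?P1 = "L \<inter> X \<times> X" and ?P2 = "L \<inter> (V - X) \<times> (V - X)"
    and ?P3 = "L \<inter> X \<times> (V - X)" and ?P4 = "L \<inter> (V - X) \<times> X"
  have "?P4 = prod.swap ` ?P3"
  proof (intro set_eqI iffI)
    fix p assume "p \<in> ?P4"
    then have "prod.swap p \<in> ?P3" using assms(3) by (auto simp: sym_def)
    then show "p \<in> prod.swap ` ?P3" by (metis image_eqI swap_swap)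
  qed (use assms(3) in \<open>auto simp: sym_def\<close>)
  then have card4: "card ?P4 = card ?P3" by (simp add: card_image)
  have fin: "finite (L \<inter> Y)" for Y using assms(1) by simp
  have "L = ?P1 \<union> ?P2 \<union> ?P3 \<union> ?P4" using assms(2) by blast
  moreover have "(?P1 \<union> ?P2 \<union> ?P3) \<inter> ?P4 = {}" by blast
  ultimately have "card L = card (?P1 \<union> ?P2 \<union> ?P3) + card ?P4"
    using fin by (metis card_Un_disjoint finite_UnI)
  also have "card (?P1 \<union> ?P2 \<union> ?P3) = card (?P1 \<union> ?P2) + card ?P3"
    using fin by (intro card_Un_disjoint) auto
  also have "card (?P1 \<union> ?P2) = card ?P1 + card ?P2"
    using fin by (intro card_Un_disjoint) auto
  finally show ?thesis using card4 by simp
qed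

lemma sum_deg_lam_subgraph:
  assumes "lam_subgraph V E ends a b F" and "W \<subseteq> V" and "finite W"
  shows "(\<Sum>v\<in>W. deg F ends v) = card W + 2 * card (W \<inter> {a, b})"
proof -
  have "(\<Sum>v\<in>W. deg F ends v) = (\<Sum>v\<in>W. 1 + (if v \<in> {a, b} then 2 else 0))"
    using assms(1,2) by (intro sum.cong) (auto simp: lam_subgraph_def)
  also have "\<dots> = card W + (\<Sum>v\<in>W. if v \<in> {a, b} then 2 else 0)"
    by (subst sum.distrib) simp
  also have "\<dots> = card W + 2 * card (W \<inter> {a, b})"
    using sum.inter_restrict[OF assms(3), of "\<lambda>_. 2::nat" "{a, b}"] by simp
  finally show ?thesis .
qed

section \<open>Bipartite and regular bipartite multigraphs\<close>

locale bipartite_mgraph =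
  fixes V :: "'v set" and E :: "'e set" and ends :: "'e \<Rightarrow> 'v set" and A B :: "'v set"
  assumes mgraph: "mgraph V E ends" and bipartition: "bipartition V E ends A B"
begin

lemma finite_V: "finite V" and finite_E: "finite E" and ends_subset: "e \<in> E \<Longrightarrow> ends e \<subseteq> V"
  using mgraph by (auto simp: mgraph_def)

lemma V_eq: "V = A \<union> B" and sides_disjoint: "A \<inter> B = {}"
  using bipartition by (auto simp: bipartition_def)

lemma finite_A: "finite A" and finite_B: "finite B"
  using finite_V V_eq by auto

lemma bipartite_mgraph_swap: "bipartite_mgraph V E ends B A"
  using mgraph bipartition by unfold_locales (auto simp: bipartition_def)

lemma edgeE:
  assumes "e \<in> E"
  obtains x y where "ends e = {x, y}" and "x \<in> A" and "y \<in> B"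
proof -
  have "card (ends e \<inter> A) = 1" "card (ends e \<inter> B) = 1"
    using bipartition assms by (auto simp: bipartition_def)
  then obtain x y where "ends e \<inter> A = {x}" "ends e \<inter> B = {y}" by (meson card_1_singletonE)
  moreover have "ends e = ends e \<inter> A \<union> ends e \<inter> B" using ends_subset[OF assms] V_eq by blast
  ultimately show ?thesis using that by blast
qed

lemma sum_deg_subset_A:
  assumes "F \<subseteq> E" and "W \<subseteq> A"
  shows "(\<Sum>v\<in>W. deg F ends v) = card {e \<in> F. ends e \<inter> W \<noteq> {}}"
proof -
  have fin: "finite F" "finite W" using assms finite_E finite_A finite_subset by blast+
  have "card (ends e \<inter> W) = of_bool (ends e \<inter> W \<noteq> {})" if e: "e \<in> F" for e
  proof -
    have "e \<in> E" using e assms(1) by blast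
    then obtain x y where "ends e = {x, y}" "x \<in> A" "y \<in> B" by (rule edgeE)
    then have "ends e \<inter> W = (if x \<in> W then {x} else {})" using assms(2) sides_disjoint by auto
    then show ?thesis by simp
  qed
  then have "(\<Sum>v\<in>W. deg F ends v) = (\<Sum>e\<in>F. of_bool (ends e \<inter> W \<noteq> {}))"
    using sum_deg_eq_sum_card_ends[OF fin] by simp
  also have "\<dots> = card {e \<in> F. ends e \<inter> W \<noteq> {}}"
    using fin(1) by (simp add: Int_def)
  finally show ?thesis .
qed

lemma sum_deg_A:
  assumes "F \<subseteq> E"
  shows "(\<Sum>v\<in>A. deg F ends v) = card F"
proof -
  have "ends e \<inter> A \<noteq> {}" if e: "e \<in> F" for e
  proof -
    have "e \<in> E" using e assms by blast
    then obtain x y where "ends e = {x, y}" "x \<in> A" by (rule edgeE)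
    then show ?thesis by auto
  qed
  then have "{e \<in> F. ends e \<inter> A \<noteq> {}} = F" by auto
  then show ?thesis using sum_deg_subset_A[OF assms subset_refl] by simp
qed

lemma edge_sign:
  assumes "e \<in> E"
  shows "int (card (ends e \<inter> (X \<inter> A))) - int (card (ends e \<inter> (X \<inter> B))) =
      (if e \<in> cut E ends X then if ends e \<inter> X \<subseteq> A then 1 else -1 else 0)"
proof -
  obtain x y where xy: "ends e = {x, y}" "x \<in> A" "y \<in> B" using assms by (rule edgeE)
  then have "x \<notin> B" "y \<notin> A" using sides_disjoint by auto
  then show ?thesis
    using xy cut_iff[OF mgraph assms, of X] by (cases "x \<in> X"; cases "y \<in> X") auto
qed

lemma signed_sum_deg:
  assumes "F \<subseteq> E"
  shows "int (\<Sum>v\<in>X \<inter> A. deg F ends v) - int (\<Sum>v\<in>X \<inter> B. deg F ends v) =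
      (\<Sum>e\<in>F. if e \<in> cut E ends X then if ends e \<inter> X \<subseteq> A then 1 else -1 else 0)"
proof -
  have fin: "finite F" "finite (X \<inter> A)" "finite (X \<inter> B)"
    using assms finite_E finite_A finite_B finite_subset by blast+
  have "int (\<Sum>v\<in>X \<inter> A. deg F ends v) - int (\<Sum>v\<in>X \<inter> B. deg F ends v) =
      (\<Sum>e\<in>F. int (card (ends e \<inter> (X \<inter> A))) - int (card (ends e \<inter> (X \<inter> B))))"
    using sum_deg_eq_sum_card_ends[OF fin(1,2)] sum_deg_eq_sum_card_ends[OF fin(1,3)]
    by (simp add: sum_subtractf)
  also have "\<dots> = (\<Sum>e\<in>F. if e \<in> cut E ends X then if ends e \<inter> X \<subseteq> A then 1 else -1 else 0)"
    using assms by (intro sum.cong refl edge_sign) blast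
  finally show ?thesis .
qed

lemma finite_lam_pairs: "finite (lam_pairs V E ends)"
  using lam_pairs_subset finite_V by (metis finite_SigmaI finite_subset)

lemma finite_lam_partners: "finite (lam_partners V E ends u)"
  using lam_partners_subset finite_V by (rule finite_subset)

lemma sides_bipartition: "bipartition V E ends (fst (sides V E ends)) (snd (sides V E ends))"
  unfolding sides_def using bipartition by (metis (mono_tags, lifting) fst_conv snd_conv someI)

lemma perfect_matching_of_bij:
  assumes f: "bij_betw f A B" and m: "\<And>s. s \<in> A \<Longrightarrow> m s \<in> E \<and> ends (m s) = {s, f s}"
  shows "perfect_matching V E ends (m ` A)"
  unfolding perfect_matching_def
proof (intro conjI ballI)
  show "m ` A \<subseteq> E" using m by blast
  fix v assume v: "v \<in> V"
  obtain s0 where s0: "{s \<in> A. v = s \<or> v = f s} = {s0}"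
  proof (cases "v \<in> A")
    case True
    then have "{s \<in> A. v = s \<or> v = f s} = {v}"
      using f sides_disjoint by (auto simp: bij_betw_def)
    then show ?thesis using that by blast
  next
    case False
    then obtain s0 where "s0 \<in> A" "v = f s0" using v V_eq f by (metis UnE bij_betw_imp_surj_on imageE)
    then have "{s \<in> A. v = s \<or> v = f s} = {s0}"
      using False f by (auto simp: bij_betw_def inj_on_def)
    then show ?thesis using that by blast
  qed
  have "{e \<in> m ` A. v \<in> ends e} = m ` {s \<in> A. v = s \<or> v = f s}" using m by auto
  then show "deg (m ` A) ends v = 1" using s0 by (simp add: deg_def)
qed

lemma perfect_matching_signed_count:
  assumes M: "perfect_matching V E ends M" and "X \<subseteq> V" and c: "M \<inter> cut E ends X = {c}"
  shows "int (card (X \<inter> A)) - int (card (X \<inter> B)) = (if ends c \<inter> X \<subseteq> A then 1 else -1)"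
proof -
  have ME: "M \<subseteq> E" and deg1: "\<And>v. v \<in> V \<Longrightarrow> deg M ends v = 1"
    using M by (auto simp: perfect_matching_def)
  have "(\<Sum>v\<in>X \<inter> Y. deg M ends v) = card (X \<inter> Y)" for Y
    using deg1 assms(2) by (simp add: subset_iff)
  then have "int (card (X \<inter> A)) - int (card (X \<inter> B)) =
      (\<Sum>e\<in>M. if e \<in> cut E ends X then if ends e \<inter> X \<subseteq> A then 1 else -1 else 0)"
    using signed_sum_deg[OF ME, of X] by simp
  also have "\<dots> = (\<Sum>e\<in>M \<inter> cut E ends X. if ends e \<inter> X \<subseteq> A then 1 else -1)"
    using ME finite_E finite_subset by (subst sum.inter_restrict) auto
  finally show ?thesis using c by simp
qed

end

locale regular_bipartite = bipartite_mgraph +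
  fixes k :: nat
  assumes regular: "v \<in> V \<Longrightarrow> deg E ends v = k" and degree_pos: "0 < k"
begin

lemma regular_bipartite_swap: "regular_bipartite V E ends B A k"
  using bipartite_mgraph_swap regular degree_pos by (simp add: regular_bipartite_def regular_bipartite_axioms_def)

lemma card_incident_A: "W \<subseteq> A \<Longrightarrow> card {e \<in> E. ends e \<inter> W \<noteq> {}} = k * card W"
  using sum_deg_subset_A[OF subset_refl] regular V_eq by (simp add: subset_iff mult.commute)

lemma card_A_eq_card_B: "card A = card B"
proof -
  have "card A * k = card E" using sum_deg_A[OF subset_refl] regular V_eq by simp
  moreover have "card B * k = card E"
    using bipartite_mgraph.sum_deg_A[OF bipartite_mgraph_swap subset_refl] regular V_eq by simp
  ultimately have "card A * k = card B * k" by simp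
  then show ?thesis using degree_pos by simp
qed

lemma card_le_card_neighbours:
  assumes "T \<subseteq> A" and N: "N = {w \<in> B. \<exists>s\<in>T. (s, w) \<in> adj E ends}"
  shows "card T \<le> card N"
    and "card T = card N \<Longrightarrow> e \<in> E \<Longrightarrow> ends e \<inter> N \<noteq> {} \<Longrightarrow> ends e \<inter> T \<noteq> {}"
proof -
  have sub: "{e \<in> E. ends e \<inter> T \<noteq> {}} \<subseteq> {e \<in> E. ends e \<inter> N \<noteq> {}}"
  proof safe
    fix e s assume e: "e \<in> E" "s \<in> ends e" "s \<in> T"
    obtain x y where xy: "ends e = {x, y}" "x \<in> A" "y \<in> B" using e(1) by (rule edgeE)
    then have "s = x" using e assms(1) sides_disjoint by auto
    then have "y \<in> N" using xy e N by (auto simp: adj_def)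
    moreover assume "ends e \<inter> N = {}"
    ultimately show False using xy by auto
  qed
  have fin: "finite {e \<in> E. ends e \<inter> N \<noteq> {}}" using finite_E by simp
  have NB: "N \<subseteq> B" using N by blast
  have cards: "card {e \<in> E. ends e \<inter> T \<noteq> {}} = k * card T" "card {e \<in> E. ends e \<inter> N \<noteq> {}} = k * card N"
    using card_incident_A[OF assms(1)] regular_bipartite.card_incident_A[OF regular_bipartite_swap NB] .
  show "card T \<le> card N" using card_mono[OF fin sub] cards degree_pos by simp
  assume "card T = card N" "e \<in> E" "ends e \<inter> N \<noteq> {}"
  then show "ends e \<inter> T \<noteq> {}" using card_subset_eq[OF fin sub] cards by auto
qed

lemma hall_condition_neighbours:
  assumes c: "c \<in> E" "ends c = {a, b}" "a \<in> A" "b \<in> B"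
  shows "hall_condition (A - {a}) (\<lambda>s. {w \<in> B - {b}. (s, w) \<in> adj E ends})"
  unfolding hall_condition_def
proof (intro allI impI)
  fix T assume T: "T \<subseteq> A - {a}"
  define N where "N = {w \<in> B. \<exists>s\<in>T. (s, w) \<in> adj E ends}"
  have TA: "T \<subseteq> A" using T by blast
  have "card T \<le> card N" using card_le_card_neighbours(1)[OF TA N_def] .
  moreover have "card T \<noteq> card N" if "b \<in> N"
  proof
    assume "card T = card N"
    then have "ends c \<inter> T \<noteq> {}" using card_le_card_neighbours(2)[OF TA N_def _ c(1)] that c(2) by blast
    then show False using T c(2-4) sides_disjoint by auto
  qed
  moreover have "finite N" using finite_B N_def by simp
  moreover have "\<Union>((\<lambda>s. {w \<in> B - {b}. (s, w) \<in> adj E ends}) ` T) = N - {b}" by (auto simp: N_def)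
  ultimately show "card T \<le> card (\<Union>((\<lambda>s. {w \<in> B - {b}. (s, w) \<in> adj E ends}) ` T))"
    by (cases "b \<in> N") (auto simp: card_Diff_singleton_if)
qed

lemma edge_in_perfect_matching:
  assumes c: "c \<in> E"
  obtains M where "perfect_matching V E ends M" and "c \<in> M"
proof -
  obtain a b where ab: "ends c = {a, b}" "a \<in> A" "b \<in> B" using c by (rule edgeE)
  obtain g where g: "inj_on g (A - {a})" "\<forall>s\<in>A - {a}. g s \<in> B - {b} \<and> (s, g s) \<in> adj E ends"
    using marriage[OF _ _ hall_condition_neighbours[OF c ab]] finite_A finite_B by auto
  define f where "f = g(a := b)"
  have "inj_on f (insert a (A - {a}))" using g by (auto simp: f_def inj_on_def)
  then have inj: "inj_on f A" using ab(2) by (simp add: insert_absorb)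
  have fAB: "f ` A \<subseteq> B" using g ab(3) by (auto simp: f_def)
  have "card (f ` A) = card B" using card_image[OF inj] card_A_eq_card_B by simp
  then have bij: "bij_betw f A B" using card_subset_eq[OF finite_B fAB] inj by (simp add: bij_betw_def)
  define m where "m s = (if s = a then c else SOME e. e \<in> E \<and> ends e = {s, f s})" for s
  have "m s \<in> E \<and> ends (m s) = {s, f s}" if s: "s \<in> A" for s
  proof (cases "s = a")
    case False
    then have "\<exists>e. e \<in> E \<and> ends e = {s, f s}" using g s by (auto simp: f_def adj_def)
    then have "(SOME e. e \<in> E \<and> ends e = {s, f s}) \<in> E \<and> ends (SOME e. e \<in> E \<and> ends e = {s, f s}) = {s, f s}"
      by (rule someI_ex)
    then show ?thesis using False by (simp add: m_def)
  qed (use c ab in \<open>simp add: m_def f_def\<close>)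
  then have "perfect_matching V E ends (m ` A)" by (rule perfect_matching_of_bij[OF bij])
  moreover have "c \<in> m ` A" using ab(2) by (force simp: m_def)
  ultimately show ?thesis by (rule that)
qed

lemma perfect_matching_exists: obtains M where "perfect_matching V E ends M"
proof (cases "E = {}")
  case True
  then have "V = {}" using regular degree_pos by (force simp: deg_def)
  then show ?thesis using that[of "{}"] by (simp add: perfect_matching_def)
next
  case False
  then show ?thesis using that edge_in_perfect_matching by blast
qed

lemma tight_cut_oriented:
  assumes X: "X \<subseteq> V" and tight: "tight_cut V E ends X"
  shows "(\<forall>e\<in>cut E ends X. ends e \<inter> X \<subseteq> A) \<or> (\<forall>e\<in>cut E ends X. ends e \<inter> X \<subseteq> B)"
proof -
  have sign: "int (card (X \<inter> A)) - int (card (X \<inter> B)) = (if ends c \<inter> X \<subseteq> A then 1 else -1)"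
    if c: "c \<in> cut E ends X" for c
  proof -
    obtain M where M: "perfect_matching V E ends M" "c \<in> M"
      using edge_in_perfect_matching c by (auto simp: cut_def)
    then show ?thesis using tight_cut_matching_edge[OF tight M c] perfect_matching_signed_count[OF M(1) X] by simp
  qed
  have "ends e \<inter> X \<subseteq> B" if e: "e \<in> cut E ends X" "\<not> ends e \<inter> X \<subseteq> A" for e
  proof -
    have "e \<in> E" using e(1) by (simp add: cut_def)
    then obtain x y where xy: "ends e = {x, y}" "x \<in> A" "y \<in> B" by (rule edgeE)
    then have "y \<notin> X \<Longrightarrow> ends e \<inter> X \<subseteq> A" by auto
    moreover have "x \<in> X \<Longrightarrow> y \<in> X \<Longrightarrow> e \<notin> cut E ends X"
      using cut_iff[OF mgraph \<open>e \<in> E\<close>] xy by auto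
    ultimately show ?thesis using e xy by auto
  qed
  then show ?thesis using sign by (metis one_neq_neg_one)
qed

lemma lam_subgraph_sides:
  assumes "lam_subgraph V E ends a b F"
  shows "(a \<in> A \<and> b \<in> B) \<or> (a \<in> B \<and> b \<in> A)"
proof -
  have F: "F \<subseteq> E" and ab: "a \<in> V" "b \<in> V" using assms by (auto simp: lam_subgraph_def)
  have "card A + 2 * card (A \<inter> {a, b}) = card B + 2 * card (B \<inter> {a, b})"
    using sum_deg_lam_subgraph[OF assms, of A] sum_deg_lam_subgraph[OF assms, of B] sum_deg_A[OF F]
      bipartite_mgraph.sum_deg_A[OF bipartite_mgraph_swap F] V_eq finite_A finite_B by simp
  then have "card (A \<inter> {a, b}) = card (B \<inter> {a, b})" using card_A_eq_card_B by simp
  then show ?thesis using ab V_eq sides_disjoint by (cases "a \<in> A"; cases "b \<in> A") auto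
qed

lemma lam_matchable_sides: "lam_matchable V E ends a b \<Longrightarrow> (a \<in> A \<and> b \<in> B) \<or> (a \<in> B \<and> b \<in> A)"
  using lam_subgraph_sides lam_matchable_iff by metis

lemma regular_bipartite_sides: "regular_bipartite V E ends (fst (sides V E ends)) (snd (sides V E ends)) k"
  using mgraph sides_bipartition regular degree_pos by unfold_locales auto

lemma card_lam_pairs: "card (lam_pairs V E ends) = 2 * rho V E ends"
proof -
  obtain A' B' where sides: "sides V E ends = (A', B')" by (cases "sides V E ends")
  interpret other: regular_bipartite V E ends A' B' k
    using regular_bipartite_sides sides by simp
  let ?L = "lam_pairs V E ends"
  have "V - A' = B'" using other.V_eq other.sides_disjoint by blast
  moreover have "?L \<inter> A' \<times> A' = {}" "?L \<inter> B' \<times> B' = {}"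
    using other.lam_matchable_sides other.sides_disjoint by (auto simp: lam_pairs_def)
  moreover have "?L \<inter> A' \<times> B' = {(a, b). a \<in> A' \<and> b \<in> B' \<and> lam_matchable V E ends a b}"
    by (auto simp: lam_pairs_def)
  ultimately show ?thesis
    using card_sym_split[OF finite_lam_pairs lam_pairs_subset sym_lam_pairs, of A'] by (simp add: rho_def sides)
qed

lemma rho_v_eq_card_lam_partners: "rho_v V E ends u = card (lam_partners V E ends u)"
proof -
  obtain A' B' where sides: "sides V E ends = (A', B')" by (cases "sides V E ends")
  interpret other: regular_bipartite V E ends A' B' k
    using regular_bipartite_sides sides by simp
  have "{w. (u \<in> A' \<and> w \<in> B' \<and> lam_matchable V E ends u w) \<or> (u \<in> B' \<and> w \<in> A' \<and> lam_matchable V E ends w u)}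
      = lam_partners V E ends u"
    using other.lam_matchable_sides lam_matchable_sym[of V E ends] by (auto simp: lam_partners_def)
  then show ?thesis by (simp add: rho_v_def sides)
qed

end

section \<open>Tight cuts\<close>

locale oriented_tight_cut = regular_bipartite +
  fixes X :: "'v set"
  assumes X_subset: "X \<subseteq> V" and tight: "tight_cut V E ends X"
    and cut_ends_A: "e \<in> cut E ends X \<Longrightarrow> ends e \<inter> X \<subseteq> A"
begin

lemma cut_degree_balance:
  assumes F: "F \<subseteq> E"
  shows "(\<Sum>v\<in>X \<inter> A. deg F ends v) = (\<Sum>v\<in>X \<inter> B. deg F ends v) + card (F \<inter> cut E ends X)"
proof -
  have "int (\<Sum>v\<in>X \<inter> A. deg F ends v) - int (\<Sum>v\<in>X \<inter> B. deg F ends v) =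
      (\<Sum>e\<in>F. of_bool (e \<in> cut E ends X))"
    using signed_sum_deg[OF F, of X] cut_ends_A by (simp add: of_bool_def cong: if_cong)
  also have "\<dots> = int (card (F \<inter> cut E ends X))"
    using finite_subset[OF F finite_E] by simp
  finally show ?thesis by linarith
qed

lemma card_X_A: "card (X \<inter> A) = card (X \<inter> B) + 1"
proof -
  obtain M where M: "perfect_matching V E ends M" by (rule perfect_matching_exists)
  then have "card (cut E ends X \<inter> M) = 1" using tight by (simp add: tight_cut_def)
  then obtain c where c: "M \<inter> cut E ends X = {c}" by (metis Int_commute card_1_singletonE)
  then have "ends c \<inter> X \<subseteq> A" using cut_ends_A by blast
  then show ?thesis using perfect_matching_signed_count[OF M X_subset c] by simp
qed

lemma card_cut: "card (cut E ends X) = k"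
proof -
  have "(\<Sum>v\<in>X \<inter> Y. deg E ends v) = k * card (X \<inter> Y)" for Y
    using regular X_subset by (simp add: subset_iff mult.commute)
  moreover have "E \<inter> cut E ends X = cut E ends X" by (auto simp: cut_def)
  ultimately show ?thesis using cut_degree_balance[OF subset_refl] card_X_A by simp
qed

lemma card_cut_lam_subgraph:
  assumes "lam_subgraph V E ends a b F"
  shows "card (F \<inter> cut E ends X) + 2 * card (X \<inter> B \<inter> {a, b}) = 1 + 2 * card (X \<inter> A \<inter> {a, b})"
proof -
  have F: "F \<subseteq> E" using assms by (simp add: lam_subgraph_def)
  have "X \<inter> Y \<subseteq> V" "finite (X \<inter> Y)" for Y
    using X_subset finite_V finite_subset by auto
  then have "card (X \<inter> A) + 2 * card (X \<inter> A \<inter> {a, b})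
      = card (X \<inter> B) + 2 * card (X \<inter> B \<inter> {a, b}) + card (F \<inter> cut E ends X)"
    using cut_degree_balance[OF F] sum_deg_lam_subgraph[OF assms] by simp
  then show ?thesis using card_X_A by linarith
qed

lemma oriented_tight_cut_complement: "oriented_tight_cut V E ends B A k (V - X)"
proof -
  interpret swapped: regular_bipartite V E ends B A k by (rule regular_bipartite_swap)
  have cut_eq: "cut E ends (V - X) = cut E ends X" by (rule cut_Diff[OF mgraph X_subset])
  show ?thesis
  proof
    show "V - X \<subseteq> V" by blast
    show "tight_cut V E ends (V - X)" using tight cut_eq by (simp add: tight_cut_def)
    fix e assume "e \<in> cut E ends (V - X)"
    then have e: "e \<in> cut E ends X" "e \<in> E" using cut_eq by (auto simp: cut_def)
    obtain x y where xy: "ends e = {x, y}" "x \<in> A" "y \<in> B" using e(2) by (rule edgeE)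
    have "y \<notin> X" using cut_ends_A[OF e(1)] xy sides_disjoint by auto
    moreover have "ends e \<inter> X \<noteq> {}" using cut_iff[OF mgraph e(2)] e(1) by blast
    ultimately show "ends e \<inter> (V - X) \<subseteq> B" using xy by auto
  qed
qed

(* H_1 = H/(V - X) of the paper; the contracted vertex is None. *)
abbreviation "V_X \<equiv> shrinkV V (V - X)"
abbreviation "E_X \<equiv> shrinkE E ends (V - X)"
abbreviation "ends_X \<equiv> shrink_ends ends (V - X)"

lemma shrinkV_eq: "V_X = insert None (Some ` X)"
  using X_subset by (simp add: shrinkV_def double_diff)

lemma shrinkE_iff: "e \<in> E_X \<longleftrightarrow> e \<in> E \<and> ends e \<inter> X \<noteq> {}"
  using ends_subset X_subset by (auto simp: shrinkE_def)

lemma cut_subset_E_X: "cut E ends X \<subseteq> E_X"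
  using cut_subset_shrinkE[OF mgraph, of "V - X"] cut_Diff[OF mgraph X_subset] by simp

lemma deg_shrink_Some: "v \<in> X \<Longrightarrow> deg F ends_X (Some v) = deg F ends v"
  by (simp add: deg_shrink_ends_Some)

lemma deg_shrink_None: "F \<subseteq> E_X \<Longrightarrow> deg F ends_X None = card (F \<inter> cut E ends X)"
proof -
  assume F: "F \<subseteq> E_X"
  have "ends e \<inter> (V - X) \<noteq> {} \<longleftrightarrow> e \<in> cut E ends X" if "e \<in> F" for e
    using that F shrinkE_iff cut_iff[OF mgraph] ends_subset by blast
  then have "{e \<in> F. ends e \<inter> (V - X) \<noteq> {}} = F \<inter> cut E ends X" by blast
  then show ?thesis by (simp add: deg_shrink_ends_None)
qed

lemma shrink_edgeE:
  assumes "e \<in> E_X"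
  obtains x y where "ends e = {x, y}" and "x \<in> X \<inter> A" and "y \<in> B"
    and "ends_X e = {Some x, if y \<in> X then Some y else None}"
proof -
  have e: "e \<in> E" "ends e \<inter> X \<noteq> {}" using assms shrinkE_iff by auto
  obtain x y where xy: "ends e = {x, y}" "x \<in> A" "y \<in> B" using e(1) by (rule edgeE)
  have "x \<in> X"
  proof (rule ccontr)
    assume "x \<notin> X"
    then have "e \<in> cut E ends X" "y \<in> X" using e xy cut_iff[OF mgraph e(1)] by auto
    then show False using cut_ends_A xy sides_disjoint by blast
  qed
  moreover have "x \<notin> V - X" "y \<in> V" using xy \<open>x \<in> X\<close> V_eq by auto
  ultimately show ?thesis
    using that xy by (auto simp: shrink_ends_def shrink_map_def)
qed

lemma mgraph_shrink: "mgraph V_X E_X ends_X"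
  unfolding mgraph_def
proof (intro conjI ballI)
  show "finite V_X" "finite E_X" using finite_V finite_E by (auto simp: shrinkV_def shrinkE_def)
  fix e assume "e \<in> E_X"
  then obtain x y where "ends e = {x, y}" "x \<in> X \<inter> A" "y \<in> B"
    "ends_X e = {Some x, if y \<in> X then Some y else None}" by (rule shrink_edgeE)
  moreover have "x \<noteq> y" using calculation sides_disjoint by auto
  ultimately show "ends_X e \<subseteq> V_X" "card (ends_X e) = 2" by (auto simp: shrinkV_eq)
qed

lemma bipartition_shrink: "bipartition V_X E_X ends_X (Some ` (X \<inter> A)) (insert None (Some ` (X \<inter> B)))"
  unfolding bipartition_def
proof (intro conjI ballI)
  show "Some ` (X \<inter> A) \<union> insert None (Some ` (X \<inter> B)) = V_X"
    using shrinkV_eq X_subset V_eq by auto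
  show "Some ` (X \<inter> A) \<inter> insert None (Some ` (X \<inter> B)) = {}" using sides_disjoint by auto
  fix e assume "e \<in> E_X"
  then obtain x y where xy: "x \<in> X \<inter> A" "y \<in> B"
    "ends_X e = {Some x, if y \<in> X then Some y else None}" by (rule shrink_edgeE)
  then have "ends_X e \<inter> Some ` (X \<inter> A) = {Some x}"
    "ends_X e \<inter> insert None (Some ` (X \<inter> B)) = {if y \<in> X then Some y else None}"
    using sides_disjoint by auto
  then show "card (ends_X e \<inter> Some ` (X \<inter> A)) = 1"
    "card (ends_X e \<inter> insert None (Some ` (X \<inter> B))) = 1" by simp_all
qed

lemma regular_bipartite_shrink:
  "regular_bipartite V_X E_X ends_X (Some ` (X \<inter> A)) (insert None (Some ` (X \<inter> B))) k"
proof
  show "mgraph V_X E_X ends_X" by (rule mgraph_shrink)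
  show "bipartition V_X E_X ends_X (Some ` (X \<inter> A)) (insert None (Some ` (X \<inter> B)))"
    by (rule bipartition_shrink)
  show "0 < k" by (rule degree_pos)
  fix w assume "w \<in> V_X"
  then consider "w = None" | v where "w = Some v" "v \<in> X" using shrinkV_eq by auto
  then show "deg E_X ends_X w = k"
  proof cases
    case 1
    have "E_X \<inter> cut E ends X = cut E ends X" using cut_subset_E_X by blast
    then show ?thesis using 1 deg_shrink_None[OF subset_refl] card_cut by simp
  next
    case 2
    have "E_X = E \<inter> E_X" by (auto simp: shrinkE_def)
    then have "deg E_X ends v = deg E ends v" using deg_Int_shrinkE[of v "V - X" E E ends] 2 by simp
    then show ?thesis using 2 deg_shrink_Some regular X_subset by auto
  qed
qed

lemma deg_glue:
  assumes "F1 \<subseteq> E_X" and "F2 \<subseteq> shrinkE E ends X"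
    and "F1 \<inter> cut E ends X = F2 \<inter> cut E ends X"
  shows "v \<in> X \<Longrightarrow> deg (F1 \<union> F2) ends v = deg F1 ends v"
    and "v \<in> V - X \<Longrightarrow> deg (F1 \<union> F2) ends v = deg F2 ends v"
proof -
  show "v \<in> X \<Longrightarrow> deg (F1 \<union> F2) ends v = deg F1 ends v"
    using deg_Un_cut[OF mgraph assms(2)] assms(3) by blast
  have "F1 \<inter> cut E ends (V - X) \<subseteq> F2" using assms(3) cut_Diff[OF mgraph X_subset] by blast
  then show "v \<in> V - X \<Longrightarrow> deg (F1 \<union> F2) ends v = deg F2 ends v"
    using deg_Un_cut[OF mgraph assms(1)] by (metis Un_commute)
qed

lemma lam_subgraph_shrink_inside:
  assumes L: "lam_subgraph V E ends a b F" and ab: "a \<in> X" "b \<in> X"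
  shows "lam_subgraph V_X E_X ends_X (Some a) (Some b) (F \<inter> E_X)"
proof -
  have F: "F \<subseteq> E" using L by (simp add: lam_subgraph_def)
  have "card (X \<inter> A \<inter> {a, b}) = 1 \<and> card (X \<inter> B \<inter> {a, b}) = 1"
    using lam_subgraph_sides[OF L] ab sides_disjoint by (auto simp: Int_insert_right)
  then have "card (F \<inter> cut E ends X) = 1" using card_cut_lam_subgraph[OF L] by simp
  moreover have "F \<inter> E_X \<inter> cut E ends X = F \<inter> cut E ends X" using cut_subset_E_X by blast
  moreover have "deg (F \<inter> E_X) ends_X (Some v) = deg F ends v" if "v \<in> X" for v
    using that deg_shrink_Some deg_Int_shrinkE[of v "V - X" F E ends] F by simp
  ultimately show ?thesis
    using L ab X_subset unfolding lam_subgraph_def by (auto simp: shrinkV_eq deg_shrink_None)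
qed

lemma lam_matchable_of_shrink_inside:
  assumes L: "lam_subgraph V_X E_X ends_X (Some a) (Some b) F1"
  shows "lam_matchable V E ends a b"
proof -
  have F1: "F1 \<subseteq> E_X" and ab: "a \<in> X" "b \<in> X" using L by (auto simp: lam_subgraph_def shrinkV_eq)
  have "deg F1 ends_X None = 1" using L by (simp add: lam_subgraph_def shrinkV_eq)
  then have "card (F1 \<inter> cut E ends X) = 1" using deg_shrink_None[OF F1] by simp
  then obtain c where c: "F1 \<inter> cut E ends X = {c}" by (rule card_1_singletonE)
  then have "c \<in> E" by (auto simp: cut_def)
  then obtain M where M: "perfect_matching V E ends M" "c \<in> M" by (rule edge_in_perfect_matching)
  have "c \<in> cut E ends X" using c by blast
  then have Mc: "M \<inter> cut E ends X = {c}" by (rule tight_cut_matching_edge[OF tight M])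
  have ME: "M \<subseteq> E" and Mdeg: "\<And>v. v \<in> V \<Longrightarrow> deg M ends v = 1"
    using M(1) by (auto simp: perfect_matching_def)
  (* Tightness makes M meet C only in the cut edge c of F1, so the outer part of M completes F1. *)
  define F2 where "F2 = M \<inter> shrinkE E ends X"
  have F2: "F2 \<subseteq> shrinkE E ends X" by (simp add: F2_def)
  have glue: "F1 \<inter> cut E ends X = F2 \<inter> cut E ends X"
    using c Mc cut_subset_shrinkE[OF mgraph, of X] by (auto simp: F2_def)
  have "lam_subgraph V E ends a b (F1 \<union> F2)"
    unfolding lam_subgraph_def
  proof (intro conjI ballI)
    show "F1 \<union> F2 \<subseteq> E" using F1 ME by (auto simp: F2_def shrinkE_def)
    show "a \<in> V" "b \<in> V" using ab X_subset by auto
    have inside: "deg (F1 \<union> F2) ends v = deg F1 ends_X (Some v)" if "v \<in> X" for v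
      using deg_glue(1)[OF F1 F2 glue that] deg_shrink_Some[OF that] by simp
    show "deg (F1 \<union> F2) ends a = 3" "deg (F1 \<union> F2) ends b = 3"
      using inside ab L by (auto simp: lam_subgraph_def)
    fix v assume v: "v \<in> V - {a, b}"
    show "deg (F1 \<union> F2) ends v = 1"
    proof (cases "v \<in> X")
      case True
      then show ?thesis using inside v L by (auto simp: lam_subgraph_def shrinkV_eq)
    next
      case False
      then have "deg (F1 \<union> F2) ends v = deg F2 ends v" using deg_glue(2)[OF F1 F2 glue] v by simp
      also have "\<dots> = deg M ends v" using deg_Int_shrinkE[OF False ME] by (simp add: F2_def)
      finally show ?thesis using Mdeg v by simp
    qed
  qed
  then show ?thesis using lam_matchable_iff by metis
qed

lemma lam_pairs_shrink:
  "lam_pairs V_X E_X ends_X = map_prod Some Some ` (lam_pairs V E ends \<inter> X \<times> X)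
     \<union> {None} \<times> lam_partners V_X E_X ends_X None \<union> lam_partners V_X E_X ends_X None \<times> {None}"
  (is "?L = ?inside \<union> ?left \<union> ?right")
proof (intro set_eqI iffI)
  fix x assume "x \<in> ?L"
  then obtain p q where x: "x = (p, q)" and pq: "lam_matchable V_X E_X ends_X p q"
    by (auto simp: lam_pairs_def)
  show "x \<in> ?inside \<union> ?left \<union> ?right"
  proof (cases p)
    case None
    then show ?thesis using x pq by (simp add: lam_partners_def)
  next
    case (Some a)
    show ?thesis
    proof (cases q)
      case None
      then have "p \<in> lam_partners V_X E_X ends_X None"
        using pq lam_matchable_sym[of V_X E_X ends_X p q] by (simp add: lam_partners_def)
      then show ?thesis using x None by simp
    next
      case (Some b)
      obtain F1 where F1: "lam_subgraph V_X E_X ends_X (Some a) (Some b) F1"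
        using pq \<open>p = Some a\<close> Some lam_matchable_iff by metis
      then have "a \<in> X" "b \<in> X" by (auto simp: lam_subgraph_def shrinkV_eq)
      moreover have "lam_matchable V E ends a b" using F1 by (rule lam_matchable_of_shrink_inside)
      ultimately show ?thesis using x \<open>p = Some a\<close> Some by (auto simp: lam_pairs_def)
    qed
  qed
next
  fix x assume x: "x \<in> ?inside \<union> ?left \<union> ?right"
  have "lam_matchable V_X E_X ends_X (Some a) (Some b)" if "(a, b) \<in> lam_pairs V E ends \<inter> X \<times> X" for a b
    using that lam_subgraph_shrink_inside by (auto simp: lam_pairs_def lam_matchable_iff)
  moreover have "lam_matchable V_X E_X ends_X w None" if "w \<in> lam_partners V_X E_X ends_X None" for w
    using that lam_matchable_sym[of V_X E_X ends_X w None] by (simp add: lam_partners_def)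
  ultimately show "x \<in> ?L" using x by (auto simp: lam_pairs_def lam_partners_def)
qed

lemma lam_partners_shrink_None: "lam_partners V_X E_X ends_X None \<subseteq> Some ` (X \<inter> A)"
proof -
  interpret G: regular_bipartite V_X E_X ends_X "Some ` (X \<inter> A)" "insert None (Some ` (X \<inter> B))" k
    by (rule regular_bipartite_shrink)
  show ?thesis using G.lam_matchable_sides by (auto simp: lam_partners_def)
qed

lemma card_lam_pairs_shrink:
  "card (lam_pairs V_X E_X ends_X)
     = card (lam_pairs V E ends \<inter> X \<times> X) + 2 * card (lam_partners V_X E_X ends_X None)"
proof -
  let ?N = "lam_partners V_X E_X ends_X None"
  have "None \<notin> ?N" using lam_partners_shrink_None by blast
  then have disj: "map_prod Some Some ` (lam_pairs V E ends \<inter> X \<times> X) \<inter> {None} \<times> ?N = {}"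
    "(map_prod Some Some ` (lam_pairs V E ends \<inter> X \<times> X) \<union> {None} \<times> ?N) \<inter> ?N \<times> {None} = {}"
    by auto
  have fin: "finite (lam_pairs V E ends \<inter> X \<times> X)" "finite ?N"
    using finite_lam_pairs finite_subset[OF lam_partners_shrink_None] finite_A by auto
  have "card (map_prod Some Some ` (lam_pairs V E ends \<inter> X \<times> X)) = card (lam_pairs V E ends \<inter> X \<times> X)"
    by (rule card_image) (auto simp: inj_on_def)
  moreover have "card (?N \<times> {None}) = card ?N" "card ({None} \<times> ?N) = card ?N"
    by (simp_all add: card_cartesian_product)
  ultimately show ?thesis
    unfolding lam_pairs_shrink using fin disj by (simp add: card_Un_disjoint)
qed

end

section \<open>Lambda-pairs across a tight cut of a cubic graph\<close>

locale cubic_tight_cut = oriented_tight_cut V E ends A B 3 X for V E ends A B X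
begin

lemma cubic_tight_cut_complement: "cubic_tight_cut V E ends B A (V - X)"
  using oriented_tight_cut_complement by (simp add: cubic_tight_cut_def)

lemma cut_subset_lam_subgraph_crossing:
  assumes L: "lam_subgraph V E ends a b F" and a: "a \<in> X" and b: "b \<notin> X"
  shows "cut E ends X \<subseteq> F"
proof -
  have "a \<in> A"
  proof (rule ccontr)
    assume "a \<notin> A"
    then have "X \<inter> A \<inter> {a, b} = {}" "X \<inter> B \<inter> {a, b} = {a}" using a b X_subset V_eq by auto
    then show False using card_cut_lam_subgraph[OF L] by simp
  qed
  then have "X \<inter> A \<inter> {a, b} = {a}" "X \<inter> B \<inter> {a, b} = {}" using a b sides_disjoint by auto
  then have "card (F \<inter> cut E ends X) = card (cut E ends X)" using card_cut_lam_subgraph[OF L] card_cut by simp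
  then show ?thesis using card_subset_eq[of "cut E ends X" "F \<inter> cut E ends X"] finite_E by (auto simp: cut_def)
qed

lemma lam_subgraph_shrink_None_iff:
  "lam_subgraph V_X E_X ends_X (Some a) None F \<longleftrightarrow>
     a \<in> X \<and> F \<subseteq> E_X \<and> cut E ends X \<subseteq> F \<and> deg F ends a = 3 \<and> (\<forall>v\<in>X - {a}. deg F ends v = 1)"
proof
  assume L: "lam_subgraph V_X E_X ends_X (Some a) None F"
  then have F: "F \<subseteq> E_X" and a: "a \<in> X" by (auto simp: lam_subgraph_def shrinkV_eq)
  have "card (F \<inter> cut E ends X) = card (cut E ends X)"
    using L deg_shrink_None[OF F] card_cut by (simp add: lam_subgraph_def)
  then have "cut E ends X \<subseteq> F"
    using card_subset_eq[of "cut E ends X" "F \<inter> cut E ends X"] finite_E by (auto simp: cut_def)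
  moreover have "deg F ends v = 1" if v: "v \<in> X - {a}" for v
  proof -
    have "Some v \<in> V_X - {Some a, None}" using v shrinkV_eq by auto
    then have "deg F ends_X (Some v) = 1" using L unfolding lam_subgraph_def by blast
    then show ?thesis using deg_shrink_Some v by simp
  qed
  ultimately show "a \<in> X \<and> F \<subseteq> E_X \<and> cut E ends X \<subseteq> F \<and> deg F ends a = 3 \<and> (\<forall>v\<in>X - {a}. deg F ends v = 1)"
    using L F a deg_shrink_Some by (auto simp: lam_subgraph_def)
next
  assume R: "a \<in> X \<and> F \<subseteq> E_X \<and> cut E ends X \<subseteq> F \<and> deg F ends a = 3 \<and> (\<forall>v\<in>X - {a}. deg F ends v = 1)"
  then have "deg F ends_X None = 3" using deg_shrink_None card_cut by (simp add: Int_absorb1)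
  then show "lam_subgraph V_X E_X ends_X (Some a) None F"
    using R deg_shrink_Some by (auto simp: lam_subgraph_def shrinkV_eq)
qed

lemma lam_subgraph_shrink_crossing:
  assumes L: "lam_subgraph V E ends a b F" and a: "a \<in> X" and b: "b \<in> V - X"
  shows "lam_subgraph V_X E_X ends_X (Some a) None (F \<inter> E_X)"
proof -
  have F: "F \<subseteq> E" using L by (simp add: lam_subgraph_def)
  have "deg (F \<inter> E_X) ends v = deg F ends v" if "v \<in> X" for v
    using that deg_Int_shrinkE[of v "V - X" F E ends] F by simp
  then show ?thesis
    unfolding lam_subgraph_shrink_None_iff
    using L a b X_subset cut_subset_lam_subgraph_crossing[OF L a] cut_subset_E_X
    by (auto simp: lam_subgraph_def)
qed

lemma lam_matchable_crossing_iff: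
  assumes a: "a \<in> X" and b: "b \<in> V - X"
  shows "lam_matchable V E ends a b \<longleftrightarrow>
     lam_matchable V_X E_X ends_X (Some a) None \<and>
     lam_matchable (shrinkV V X) (shrinkE E ends X) (shrink_ends ends X) (Some b) None"
proof -
  interpret co: cubic_tight_cut V E ends B A "V - X" by (rule cubic_tight_cut_complement)
  have VX: "V - (V - X) = X" using X_subset by auto
  have cut_eq: "cut E ends (V - X) = cut E ends X" by (rule cut_Diff[OF mgraph X_subset])
  show ?thesis
  proof
    assume "lam_matchable V E ends a b"
    then obtain F where L: "lam_subgraph V E ends a b F" using lam_matchable_iff by metis
    then have "lam_subgraph V E ends b a F" using lam_subgraph_sym by metis
    then show "lam_matchable V_X E_X ends_X (Some a) None \<and>
        lam_matchable (shrinkV V X) (shrinkE E ends X) (shrink_ends ends X) (Some b) None"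
      using lam_subgraph_shrink_crossing[OF L a b] co.lam_subgraph_shrink_crossing[of b a F] a b VX
      by (auto simp: lam_matchable_iff)
  next
    assume "lam_matchable V_X E_X ends_X (Some a) None \<and>
        lam_matchable (shrinkV V X) (shrinkE E ends X) (shrink_ends ends X) (Some b) None"
    then obtain F1 F2 where "lam_subgraph V_X E_X ends_X (Some a) None F1"
      and "lam_subgraph (shrinkV V X) (shrinkE E ends X) (shrink_ends ends X) (Some b) None F2"
      using lam_matchable_iff by metis
    then have F1: "F1 \<subseteq> E_X" "cut E ends X \<subseteq> F1" "deg F1 ends a = 3" "\<forall>v\<in>X - {a}. deg F1 ends v = 1"
      and F2: "F2 \<subseteq> shrinkE E ends X" "cut E ends X \<subseteq> F2" "deg F2 ends b = 3"
        "\<forall>v\<in>V - X - {b}. deg F2 ends v = 1"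
      using lam_subgraph_shrink_None_iff co.lam_subgraph_shrink_None_iff VX cut_eq by auto
    have glue: "F1 \<inter> cut E ends X = F2 \<inter> cut E ends X" using F1(2) F2(2) by blast
    have "lam_subgraph V E ends a b (F1 \<union> F2)"
      unfolding lam_subgraph_def
    proof (intro conjI ballI)
      show "F1 \<union> F2 \<subseteq> E" using F1(1) F2(1) by (auto simp: shrinkE_def)
      show "a \<in> V" "b \<in> V" using a b X_subset by auto
      show "deg (F1 \<union> F2) ends a = 3" "deg (F1 \<union> F2) ends b = 3"
        using deg_glue[OF F1(1) F2(1) glue] F1(3) F2(3) a b by auto
      fix v assume "v \<in> V - {a, b}"
      then show "deg (F1 \<union> F2) ends v = 1"
        using deg_glue[OF F1(1) F2(1) glue] F1(4) F2(4) by (cases "v \<in> X") auto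
    qed
    then show "lam_matchable V E ends a b" using lam_matchable_iff by metis
  qed
qed

lemma lam_pairs_crossing:
  "map_prod Some Some ` (lam_pairs V E ends \<inter> X \<times> (V - X))
     = lam_partners V_X E_X ends_X None \<times> lam_partners (shrinkV V X) (shrinkE E ends X) (shrink_ends ends X) None"
proof -
  interpret co: cubic_tight_cut V E ends B A "V - X" by (rule cubic_tight_cut_complement)
  have VX: "V - (V - X) = X" using X_subset by auto
  have N1: "lam_partners V_X E_X ends_X None \<subseteq> Some ` X" using lam_partners_shrink_None by blast
  have N2: "lam_partners (shrinkV V X) (shrinkE E ends X) (shrink_ends ends X) None \<subseteq> Some ` (V - X)"
    using co.lam_partners_shrink_None VX by auto
  show ?thesis
  proof (intro set_eqI iffI)
    fix x assume "x \<in> map_prod Some Some ` (lam_pairs V E ends \<inter> X \<times> (V - X))"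
    then obtain a b where "x = (Some a, Some b)" "a \<in> X" "b \<in> V - X" "lam_matchable V E ends a b"
      by (auto simp: lam_pairs_def)
    then show "x \<in> lam_partners V_X E_X ends_X None \<times>
        lam_partners (shrinkV V X) (shrinkE E ends X) (shrink_ends ends X) None"
      using lam_matchable_crossing_iff lam_matchable_sym[of V_X E_X ends_X]
        lam_matchable_sym[of "shrinkV V X" "shrinkE E ends X" "shrink_ends ends X"]
      by (simp add: lam_partners_def)
  next
    fix x assume x: "x \<in> lam_partners V_X E_X ends_X None \<times>
        lam_partners (shrinkV V X) (shrinkE E ends X) (shrink_ends ends X) None"
    then obtain a b where ab: "x = (Some a, Some b)" "a \<in> X" "b \<in> V - X"
      using N1 N2 by blast
    then have "lam_matchable V E ends a b"
      using x lam_matchable_crossing_iff lam_matchable_sym[of V_X E_X ends_X]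
        lam_matchable_sym[of "shrinkV V X" "shrinkE E ends X" "shrink_ends ends X"]
      by (simp add: lam_partners_def)
    then show "x \<in> map_prod Some Some ` (lam_pairs V E ends \<inter> X \<times> (V - X))"
      using ab by (auto simp: lam_pairs_def)
  qed
qed

lemma card_lam_pairs_crossing:
  "card (lam_pairs V E ends \<inter> X \<times> (V - X))
     = card (lam_partners V_X E_X ends_X None)
       * card (lam_partners (shrinkV V X) (shrinkE E ends X) (shrink_ends ends X) None)"
proof -
  have "card (lam_pairs V E ends \<inter> X \<times> (V - X))
      = card (map_prod Some Some ` (lam_pairs V E ends \<inter> X \<times> (V - X)))"
    by (rule card_image[symmetric]) (auto simp: inj_on_def)
  then show ?thesis by (simp add: lam_pairs_crossing card_cartesian_product)
qed

lemma rho_tight_cut_decomposition: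
  "int (rho V E ends) =
     int (rho V_X E_X ends_X) - int (rho_v V_X E_X ends_X None)
   + int (rho (shrinkV V X) (shrinkE E ends X) (shrink_ends ends X))
   - int (rho_v (shrinkV V X) (shrinkE E ends X) (shrink_ends ends X) None)
   + int (rho_v V_X E_X ends_X None) * int (rho_v (shrinkV V X) (shrinkE E ends X) (shrink_ends ends X) None)"
proof -
  interpret co: cubic_tight_cut V E ends B A "V - X" by (rule cubic_tight_cut_complement)
  have VX: "V - (V - X) = X" using X_subset by auto
  interpret G1: regular_bipartite V_X E_X ends_X "Some ` (X \<inter> A)" "insert None (Some ` (X \<inter> B))" 3
    by (rule regular_bipartite_shrink)
  interpret G2: regular_bipartite "shrinkV V X" "shrinkE E ends X" "shrink_ends ends X"
      "Some ` ((V - X) \<inter> B)" "insert None (Some ` ((V - X) \<inter> A))" 3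
    using co.regular_bipartite_shrink VX by simp
  let ?L = "lam_pairs V E ends"
  let ?N1 = "lam_partners V_X E_X ends_X None"
  let ?N2 = "lam_partners (shrinkV V X) (shrinkE E ends X) (shrink_ends ends X) None"
  have "2 * rho V E ends = card (?L \<inter> X \<times> X) + card (?L \<inter> (V - X) \<times> (V - X)) + 2 * (card ?N1 * card ?N2)"
    using card_lam_pairs card_sym_split[OF finite_lam_pairs lam_pairs_subset sym_lam_pairs, of X]
      card_lam_pairs_crossing by simp
  moreover have "2 * rho V_X E_X ends_X = card (?L \<inter> X \<times> X) + 2 * card ?N1"
    using G1.card_lam_pairs card_lam_pairs_shrink by simp
  moreover have "2 * rho (shrinkV V X) (shrinkE E ends X) (shrink_ends ends X)
      = card (?L \<inter> (V - X) \<times> (V - X)) + 2 * card ?N2"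
    using G2.card_lam_pairs co.card_lam_pairs_shrink VX by simp
  moreover have "int r = int r1 - int n1 + int r2 - int n2 + int n1 * int n2"
    if "2 * r = p + q + 2 * (n1 * n2)" "2 * r1 = p + 2 * n1" "2 * r2 = q + 2 * n2" for r r1 r2 p q n1 n2 :: nat
  proof -
    have "2 * int r = int p + int q + 2 * (int n1 * int n2)"
      "2 * int r1 = int p + 2 * int n1" "2 * int r2 = int q + 2 * int n2"
      using arg_cong[OF that(1), of int] arg_cong[OF that(2), of int] arg_cong[OF that(3), of int] by simp_all
    then show ?thesis by linarith
  qed
  ultimately show ?thesis
    using G1.rho_v_eq_card_lam_partners G2.rho_v_eq_card_lam_partners by presburger
qed

end

theorem corollary2p7:
  fixes V :: "'v set" and E :: "'e set" and ends :: "'e \<Rightarrow> 'v set" and X :: "'v set"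
  assumes "mgraph V E ends" and "connected_graph V E ends" and "bipartite V E ends"
    and "cubic V E ends"
    and "X \<subseteq> V" and "tight_cut V E ends X"
  defines "V1 \<equiv> shrinkV V (V - X)" and "E1 \<equiv> shrinkE E ends (V - X)"
    and "g1 \<equiv> shrink_ends ends (V - X)"
    and "V2 \<equiv> shrinkV V X" and "E2 \<equiv> shrinkE E ends X"
    and "g2 \<equiv> shrink_ends ends X"
  shows "int (rho V E ends) =
           int (rho V1 E1 g1) - int (rho_v V1 E1 g1 None)
         + int (rho V2 E2 g2) - int (rho_v V2 E2 g2 None)
         + int (rho_v V1 E1 g1 None) * int (rho_v V2 E2 g2 None)"
proof -
  obtain A B where "bipartition V E ends A B" using assms(3) by (auto simp: bipartite_def)
  then interpret regular_bipartite V E ends A B 3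
    using assms(1,4) by unfold_locales (auto simp: cubic_def)
  have "cubic_tight_cut V E ends A B X \<or> cubic_tight_cut V E ends B A X"
    using tight_cut_oriented[OF assms(5,6)] regular_bipartite_axioms regular_bipartite_swap assms(5,6)
    by (auto simp: cubic_tight_cut_def oriented_tight_cut_def oriented_tight_cut_axioms_def)
  then show ?thesis
    unfolding V1_def E1_def g1_def V2_def E2_def g2_def
    using cubic_tight_cut.rho_tight_cut_decomposition by blast
qed

end
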